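(* Let $\Delta$ be a mesh. If a pair $(A,B)$ of functions on $\Delta$ is a discrete imprecise copula, then $(A^{\mathrm{BL}},B^{\mathrm{BL}})$ is an imprecise copula. Conversely, if $(A,B)$ is an imprecise copula on $[0,1]^2$, then $(A|_\Delta,B|_\Delta)$ is a discrete imprecise copula.
   Context: A mesh is $\Delta=\delta_x\times\delta_y$ with $\delta_x=\{0=x_0<\dots<x_p=1\}$, $\delta_y=\{0=y_0<\dots<y_q=1\}$. For a 1-increasing (nondecreasing in each variable) function $A$ on $\Delta$, $A^{\mathrm{BL}}$ is the function on $[0,1]^2$ which on each cell $[x_{i-1},x_i]\times[y_{j-1},y_j]$ is the bilinear interpolation (affine in each variable separately) of the corner values. Let $\mathbb{D}$ be $[0,1]^2$ or a mesh. A pair $(A,B)$ of functions $\mathbb{D}\to\mathbb{R}$ is an imprecise copula (called a discrete imprecise copula if $\mathbb{D}$ is a mesh) if both are grounded ($A(x,0)=A(0,y)=0$ for points in $\mathbb{D}$), both have $1$ as neutral element ($A(x,1)=x$, $A(1,y)=y$ for points in $\mathbb{D}$), and for every rectangle with corners in $\mathbb{D}$, with southwest corner $\mathbf{a}$, southeast $\mathbf{b}$, northeast $\mathbf{c}$, northwest $\mathbf{d}$: (IC1) $A(\mathbf{a})+B(\mathbf{c})-A(\mathbf{b})-A(\mathbf{d})\ge0$; (IC2) $B(\mathbf{a})+A(\mathbf{c})-A(\mathbf{b})-A(\mathbf{d})\ge0$; (IC3) $B(\mathbf{a})+B(\mathbf{c})-B(\mathbf{b})-A(\mathbf{d})\ge0$;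 (IC4) $B(\mathbf{a})+B(\mathbf{c})-A(\mathbf{b})-B(\mathbf{d})\ge0$. For an imprecise copula, $A$ and $B$ are quasi-copulas (discrete quasi-copulas in the mesh case), hence 1-increasing, and $A\le B$. *)

theory Defs
  imports "HOL-Analysis.Analysis"
begin

definition partition01 :: "real set \<Rightarrow> bool" where
  "partition01 X \<longleftrightarrow> finite X \<and> X \<subseteq> {0..1} \<and> 0 \<in> X \<and> 1 \<in> X"

text \<open>Imprecise copula on a domain D = X \<times> Y (X, Y either [0,1] or partitions).
  Rectangles with corners in D: a=(x1,y1) SW, b=(x2,y1) SE, c=(x2,y2) NE, d=(x1,y2) NW,
  with x1 \<le> x2 and y1 \<le> y2.\<close>
definition imprecise_copula ::
  "real set \<Rightarrow> real set \<Rightarrow> (real \<times> real \<Rightarrow> real) \<Rightarrow> (real \<times> real \<Rightarrow> real) \<Rightarrow> bool" where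
  "imprecise_copula X Y A B \<longleftrightarrow>
     (\<forall>x\<in>X. (0::real) \<in> Y \<longrightarrow> A (x, 0) = 0 \<and> B (x, 0) = 0) \<and>
     (\<forall>y\<in>Y. (0::real) \<in> X \<longrightarrow> A (0, y) = 0 \<and> B (0, y) = 0) \<and>
     (\<forall>x\<in>X. (1::real) \<in> Y \<longrightarrow> A (x, 1) = x \<and> B (x, 1) = x) \<and>
     (\<forall>y\<in>Y. (1::real) \<in> X \<longrightarrow> A (1, y) = y \<and> B (1, y) = y) \<and>
     (\<forall>x1\<in>X. \<forall>x2\<in>X. \<forall>y1\<in>Y. \<forall>y2\<in>Y. x1 \<le> x2 \<longrightarrow> y1 \<le> y2 \<longrightarrow>
        A (x1, y1) + B (x2, y2) - A (x2, y1) - A (x1, y2) \<ge> 0 \<and>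
        B (x1, y1) + A (x2, y2) - A (x2, y1) - A (x1, y2) \<ge> 0 \<and>
        B (x1, y1) + B (x2, y2) - B (x2, y1) - A (x1, y2) \<ge> 0 \<and>
        B (x1, y1) + B (x2, y2) - A (x2, y1) - B (x1, y2) \<ge> 0)"

definition cell_lo :: "real set \<Rightarrow> real \<Rightarrow> real" where
  "cell_lo X u = Max {x \<in> X. x \<le> u \<and> x < 1}"

definition cell_hi :: "real set \<Rightarrow> real \<Rightarrow> real" where
  "cell_hi X u = Min {x \<in> X. cell_lo X u < x}"

definition bilinear_ext ::
  "real set \<Rightarrow> real set \<Rightarrow> (real \<times> real \<Rightarrow> real) \<Rightarrow> real \<times> real \<Rightarrow> real" where
  "bilinear_ext X Y A = (\<lambda>(u, v).
     let x0 = cell_lo X u; x1 = cell_hi X u; y0 = cell_lo Y v; y1 = cell_hi Y v;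
         s = (u - x0) / (x1 - x0); t = (v - y0) / (y1 - y0)
     in (1 - s) * (1 - t) * A (x0, y0) + s * (1 - t) * A (x1, y0)
        + (1 - s) * t * A (x0, y1) + s * t * A (x1, y1))"

end

theory Submission
  imports Defs
begin

text \<open>On each cell of the mesh, A^BL is a convex combination of the four corner values, and
  every rectangle expression of (IC1)--(IC4) is piecewise linear in each of its four coordinates
  separately. A piecewise linear function of one variable is nonnegative on an interval as soon as
  it is nonnegative at the two endpoints and at the mesh points in between. Applying this one
  coordinate at a time reduces each inequality for (A^BL, B^BL) to mesh rectangles, where it is the
  hypothesis, and to degenerate rectangles, where it reduces to A^BL \<le> B^BL, which follows from
  A \<le> B by convexity. The converse direction is restriction to a subdomain.\<close>

lemma partition01_bounds: "partition01 X \<Longrightarrow> x \<in> X \<Longrightarrow> 0 \<le> x \<and> x \<le> 1"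
  unfolding partition01_def by auto

context
  fixes X :: "real set" and u :: real
  assumes X: "partition01 X" and u: "0 \<le> u" "u \<le> 1"
begin

lemma cell_lo_mem: "cell_lo X u \<in> X"
  and cell_lo_le: "cell_lo X u \<le> u"
  and cell_lo_less_one: "cell_lo X u < 1"
proof -
  have "finite {x \<in> X. x \<le> u \<and> x < 1}" "{x \<in> X. x \<le> u \<and> x < 1} \<noteq> {}"
    using X u unfolding partition01_def by auto
  from Max_in[OF this] show "cell_lo X u \<in> X" "cell_lo X u \<le> u" "cell_lo X u < 1"
    unfolding cell_lo_def by auto
qed

lemma cell_lo_greatest: "x \<in> X \<Longrightarrow> x \<le> u \<Longrightarrow> x < 1 \<Longrightarrow> x \<le> cell_lo X u"
  using X unfolding cell_lo_def partition01_def by (intro Max_ge) auto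

lemma cell_hi_mem: "cell_hi X u \<in> X"
  and cell_lo_less_cell_hi: "cell_lo X u < cell_hi X u"
proof -
  have "finite {x \<in> X. cell_lo X u < x}" "{x \<in> X. cell_lo X u < x} \<noteq> {}"
    using X cell_lo_less_one unfolding partition01_def by auto
  from Min_in[OF this] show "cell_hi X u \<in> X" "cell_lo X u < cell_hi X u"
    unfolding cell_hi_def by auto
qed

lemma cell_hi_least: "x \<in> X \<Longrightarrow> cell_lo X u < x \<Longrightarrow> cell_hi X u \<le> x"
  using X unfolding cell_hi_def partition01_def by (intro Min_le) auto

lemma cell_hi_ge: "u \<le> cell_hi X u"
proof (rule ccontr)
  assume "\<not> u \<le> cell_hi X u"
  then have "cell_hi X u \<le> cell_lo X u"
    using u cell_hi_mem by (intro cell_lo_greatest) auto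
  then show False
    using cell_lo_less_cell_hi by simp
qed

end

lemma cell_of_point_in_cell:
  assumes X: "partition01 X" and u: "0 \<le> u" "u \<le> 1"
    and "cell_lo X u \<le> w" "w < cell_hi X u"
  shows "cell_lo X w = cell_lo X u" "cell_hi X w = cell_hi X u"
proof -
  have w: "0 \<le> w" "w \<le> 1"
    using assms partition01_bounds[OF X cell_lo_mem[OF X u]] partition01_bounds[OF X cell_hi_mem[OF X u]] by auto
  show lo: "cell_lo X w = cell_lo X u"
  proof (rule antisym)
    show "cell_lo X u \<le> cell_lo X w"
      using assms by (intro cell_lo_greatest[OF X w] cell_lo_mem[OF X u] cell_lo_less_one[OF X u])
    show "cell_lo X w \<le> cell_lo X u"
      using cell_hi_least[OF X u cell_lo_mem[OF X w]] cell_lo_le[OF X w] assms by force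
  qed
  show "cell_hi X w = cell_hi X u"
    using cell_hi_least[OF X w cell_hi_mem[OF X u]] cell_hi_least[OF X u cell_hi_mem[OF X w]]
      cell_lo_less_cell_hi[OF X u] cell_lo_less_cell_hi[OF X w] lo by force
qed


definition lin_interp :: "real set \<Rightarrow> (real \<Rightarrow> real) \<Rightarrow> real \<Rightarrow> real" where
  "lin_interp X f u = (1 - (u - cell_lo X u) / (cell_hi X u - cell_lo X u)) * f (cell_lo X u)
     + (u - cell_lo X u) / (cell_hi X u - cell_lo X u) * f (cell_hi X u)"

lemma lin_interp_node:
  assumes X: "partition01 X" and g: "g \<in> X"
  shows "lin_interp X f g = f g"
proof -
  have g01: "0 \<le> g" "g \<le> 1"
    using partition01_bounds[OF X g] by auto
  show ?thesis
  proof (cases "g < 1")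
    case True
    then have "cell_lo X g = g"
      using cell_lo_le[OF X g01] cell_lo_greatest[OF X g01 g] by force
    then show ?thesis
      unfolding lin_interp_def by simp
  next
    case False
    then have "g = 1" "cell_hi X g = 1"
      using g01 cell_hi_ge[OF X g01] partition01_bounds[OF X cell_hi_mem[OF X g01]] by auto
    then show ?thesis
      using cell_lo_less_one[OF X g01] unfolding lin_interp_def by simp
  qed
qed

lemma lin_interp_cong:
  assumes "partition01 X" "0 \<le> u" "u \<le> 1" and "\<And>x. x \<in> X \<Longrightarrow> f x = g x"
  shows "lin_interp X f u = lin_interp X g u"
  using assms cell_lo_mem cell_hi_mem unfolding lin_interp_def by simp

lemma lin_interp_mono:
  assumes X: "partition01 X" and u: "0 \<le> u" "u \<le> 1" and fg: "\<And>x. x \<in> X \<Longrightarrow> f x \<le> g x"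
  shows "lin_interp X f u \<le> lin_interp X g u"
proof -
  define s where "s = (u - cell_lo X u) / (cell_hi X u - cell_lo X u)"
  have "0 \<le> s" "s \<le> 1"
    using cell_lo_le[OF X u] cell_hi_ge[OF X u] cell_lo_less_cell_hi[OF X u]
    unfolding s_def by (auto simp: divide_simps)
  then show ?thesis
    using fg[OF cell_lo_mem[OF X u]] fg[OF cell_hi_mem[OF X u]]
    unfolding lin_interp_def s_def[symmetric] by (intro add_mono mult_left_mono) auto
qed

lemma lin_interp_id:
  assumes X: "partition01 X" and u: "0 \<le> u" "u \<le> 1"
  shows "lin_interp X (\<lambda>x. x) u = u"
proof -
  define s where "s = (u - cell_lo X u) / (cell_hi X u - cell_lo X u)"
  have "s * cell_hi X u - s * cell_lo X u = u - cell_lo X u"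
    using cell_lo_less_cell_hi[OF X u] unfolding s_def right_diff_distrib[symmetric] by simp
  then show ?thesis
    unfolding lin_interp_def s_def[symmetric] by (simp add: algebra_simps)
qed

lemma lin_interp_add: "lin_interp X (\<lambda>x. f x + g x) u = lin_interp X f u + lin_interp X g u"
  unfolding lin_interp_def by (simp add: distrib_left)

lemma lin_interp_diff: "lin_interp X (\<lambda>x. f x - g x) u = lin_interp X f u - lin_interp X g u"
  unfolding lin_interp_def by (simp add: right_diff_distrib)

lemma lin_interp_const: "lin_interp X (\<lambda>x. c) u = c"
  unfolding lin_interp_def by (simp add: algebra_simps)

definition piecewise_linear :: "real set \<Rightarrow> (real \<Rightarrow> real) \<Rightarrow> bool" where
  "piecewise_linear X h \<longleftrightarrow> (\<forall>u. 0 \<le> u \<and> u \<le> 1 \<longrightarrow> h u = lin_interp X h u)"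

lemma piecewise_linear_lin_interp: "partition01 X \<Longrightarrow> piecewise_linear X (lin_interp X f)"
  unfolding piecewise_linear_def by (metis lin_interp_cong lin_interp_node)

lemma piecewise_linear_const: "piecewise_linear X (\<lambda>u. c)"
  unfolding piecewise_linear_def by (simp add: lin_interp_const)

lemma piecewise_linear_add:
  "piecewise_linear X f \<Longrightarrow> piecewise_linear X g \<Longrightarrow> piecewise_linear X (\<lambda>u. f u + g u)"
  unfolding piecewise_linear_def by (simp add: lin_interp_add)

lemma piecewise_linear_diff:
  "piecewise_linear X f \<Longrightarrow> piecewise_linear X g \<Longrightarrow> piecewise_linear X (\<lambda>u. f u - g u)"
  unfolding piecewise_linear_def by (simp add: lin_interp_diff)

lemma piecewise_linear_on_cell:
  assumes X: "partition01 X" and h: "piecewise_linear X h" and u: "0 \<le> u" "u \<le> 1"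
    and w: "cell_lo X u \<le> w" "w \<le> cell_hi X u"
  shows "h w = h (cell_lo X u)
    + (h (cell_hi X u) - h (cell_lo X u)) / (cell_hi X u - cell_lo X u) * (w - cell_lo X u)"
proof (cases "w = cell_hi X u")
  case True
  then show ?thesis
    using cell_lo_less_cell_hi[OF X u] by simp
next
  case False
  then have cell: "cell_lo X w = cell_lo X u" "cell_hi X w = cell_hi X u"
    using cell_of_point_in_cell[OF X u] w by auto
  have w01: "0 \<le> w" "w \<le> 1"
    using w partition01_bounds[OF X cell_lo_mem[OF X u]] partition01_bounds[OF X cell_hi_mem[OF X u]]
    by auto
  define s where "s = (w - cell_lo X u) / (cell_hi X u - cell_lo X u)"
  have "h w = lin_interp X h w"
    using h w01 unfolding piecewise_linear_def by blast
  also have "\<dots> = (1 - s) * h (cell_lo X u) + s * h (cell_hi X u)"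
    unfolding lin_interp_def cell s_def ..
  also have "\<dots> = h (cell_lo X u) + s * (h (cell_hi X u) - h (cell_lo X u))"
    by algebra
  finally show ?thesis
    unfolding s_def by simp
qed

lemma affine_nonneg_between:
  fixes a b c k u :: real
  assumes "a \<le> u" "u \<le> b" "0 \<le> c + k * a" "0 \<le> c + k * b"
  shows "0 \<le> c + k * u"
proof (cases "0 \<le> k")
  case True
  then have "k * a \<le> k * u"
    using assms by (simp add: mult_left_mono)
  then show ?thesis
    using assms by linarith
next
  case False
  then have "k * b \<le> k * u"
    using assms by (simp add: mult_left_mono_neg)
  then show ?thesis
    using assms by linarith
qed

text \<open>On the cell of u, h is affine; it is nonnegative at the ends of the cell clipped to [p, q],
  these being either p, q or mesh points.\<close>

lemma piecewise_linear_nonneg: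
  assumes X: "partition01 X" and h: "piecewise_linear X h"
    and pq: "0 \<le> p" "p \<le> u" "u \<le> q" "q \<le> 1"
    and hp: "0 \<le> h p" and hq: "0 \<le> h q"
    and nodes: "\<And>g. g \<in> X \<Longrightarrow> p \<le> g \<Longrightarrow> g \<le> q \<Longrightarrow> 0 \<le> h g"
  shows "0 \<le> h u"
proof -
  have u: "0 \<le> u" "u \<le> 1"
    using pq by auto
  define lo where "lo = cell_lo X u"
  define hi where "hi = cell_hi X u"
  define k where "k = (h hi - h lo) / (hi - lo)"
  have cell: "lo \<in> X" "hi \<in> X" "lo \<le> u" "u \<le> hi"
    unfolding lo_def hi_def using cell_lo_mem cell_hi_mem cell_lo_le cell_hi_ge X u by auto
  have affine: "h w = (h lo - k * lo) + k * w" if "lo \<le> w" "w \<le> hi" for w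
    using piecewise_linear_on_cell[OF X h u that[unfolded lo_def hi_def]]
    unfolding lo_def[symmetric] hi_def[symmetric] k_def[symmetric] by (simp add: algebra_simps)
  have "0 \<le> h (max p lo)"
    using hp nodes[of lo] cell pq by (cases "p \<le> lo") auto
  moreover have "0 \<le> h (min q hi)"
    using hq nodes[of hi] cell pq by (cases "hi \<le> q") auto
  ultimately have "0 \<le> (h lo - k * lo) + k * u"
    using affine[of "max p lo"] affine[of "min q hi"] cell pq
    by (intro affine_nonneg_between[of "max p lo" u "min q hi"]) auto
  then show ?thesis
    using affine[of u] cell by simp
qed

lemma piecewise_linear2_nonneg:
  fixes E :: "real \<Rightarrow> real \<Rightarrow> real"
  assumes X: "partition01 X"
    and pl1: "\<And>x2. piecewise_linear X (\<lambda>x1. E x1 x2)"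
    and pl2: "\<And>x1. piecewise_linear X (\<lambda>x2. E x1 x2)"
    and nodes: "\<And>g1 g2. g1 \<in> X \<Longrightarrow> g2 \<in> X \<Longrightarrow> g1 \<le> g2 \<Longrightarrow> 0 \<le> E g1 g2"
    and diagonal: "\<And>x. 0 \<le> x \<Longrightarrow> x \<le> 1 \<Longrightarrow> 0 \<le> E x x"
    and x: "0 \<le> x1" "x1 \<le> x2" "x2 \<le> 1"
  shows "0 \<le> E x1 x2"
proof -
  have "0 \<in> X" "1 \<in> X"
    using X unfolding partition01_def by auto
  have upto_node: "0 \<le> E y g" if "g \<in> X" "0 \<le> y" "y \<le> g" for y g
    using piecewise_linear_nonneg[OF X pl1, of 0 y g] that partition01_bounds[OF X \<open>g \<in> X\<close>]
      nodes[OF \<open>0 \<in> X\<close> \<open>g \<in> X\<close>] diagonal[of g] nodes[OF _ \<open>g \<in> X\<close>]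
    by auto
  show ?thesis
    using piecewise_linear_nonneg[OF X pl2, of x1 x2 1] x diagonal[of x1]
      upto_node[OF \<open>1 \<in> X\<close>, of x1] upto_node
    by auto
qed

lemma piecewise_linear4_nonneg:
  fixes E :: "real \<Rightarrow> real \<Rightarrow> real \<Rightarrow> real \<Rightarrow> real"
  assumes X: "partition01 X" and Y: "partition01 Y"
    and pl1: "\<And>x2 y1 y2. piecewise_linear X (\<lambda>x1. E x1 x2 y1 y2)"
    and pl2: "\<And>x1 y1 y2. piecewise_linear X (\<lambda>x2. E x1 x2 y1 y2)"
    and pl3: "\<And>x1 x2 y2. piecewise_linear Y (\<lambda>y1. E x1 x2 y1 y2)"
    and pl4: "\<And>x1 x2 y1. piecewise_linear Y (\<lambda>y2. E x1 x2 y1 y2)"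
    and nodes: "\<And>g1 g2 h1 h2. g1 \<in> X \<Longrightarrow> g2 \<in> X \<Longrightarrow> h1 \<in> Y \<Longrightarrow> h2 \<in> Y \<Longrightarrow>
        g1 \<le> g2 \<Longrightarrow> h1 \<le> h2 \<Longrightarrow> 0 \<le> E g1 g2 h1 h2"
    and diagonal_x: "\<And>x y1 y2. 0 \<le> x \<Longrightarrow> x \<le> 1 \<Longrightarrow> 0 \<le> y1 \<Longrightarrow> y1 \<le> y2 \<Longrightarrow> y2 \<le> 1 \<Longrightarrow>
        0 \<le> E x x y1 y2"
    and diagonal_y: "\<And>x1 x2 y. 0 \<le> x1 \<Longrightarrow> x1 \<le> x2 \<Longrightarrow> x2 \<le> 1 \<Longrightarrow> 0 \<le> y \<Longrightarrow> y \<le> 1 \<Longrightarrow>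
        0 \<le> E x1 x2 y y"
    and x: "0 \<le> x1" "x1 \<le> x2" "x2 \<le> 1" and y: "0 \<le> y1" "y1 \<le> y2" "y2 \<le> 1"
  shows "0 \<le> E x1 x2 y1 y2"
proof -
  have "0 \<le> E g1 g2 y1 y2" if "g1 \<in> X" "g2 \<in> X" "g1 \<le> g2" for g1 g2
    using piecewise_linear2_nonneg[OF Y pl3 pl4, of g1 g2 y1 y2] nodes that y
      diagonal_y[of g1 g2] partition01_bounds[OF X] by auto
  then show ?thesis
    using piecewise_linear2_nonneg[OF X pl1 pl2, of y1 y2 x1 x2] diagonal_x x y by auto
qed

lemma bilinear_ext_eq_lin_interp_x:
  "bilinear_ext X Y A (u, v) = lin_interp X (\<lambda>x. lin_interp Y (\<lambda>y. A (x, y)) v) u"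
  unfolding bilinear_ext_def lin_interp_def Let_def prod.case by algebra

lemma bilinear_ext_eq_lin_interp_y:
  "bilinear_ext X Y A (u, v) = lin_interp Y (\<lambda>y. lin_interp X (\<lambda>x. A (x, y)) u) v"
  unfolding bilinear_ext_def lin_interp_def Let_def prod.case by algebra

lemma piecewise_linear_bilinear_ext_x:
  "partition01 X \<Longrightarrow> piecewise_linear X (\<lambda>u. bilinear_ext X Y A (u, v))"
  unfolding bilinear_ext_eq_lin_interp_x by (rule piecewise_linear_lin_interp)

lemma piecewise_linear_bilinear_ext_y:
  "partition01 Y \<Longrightarrow> piecewise_linear Y (\<lambda>v. bilinear_ext X Y A (u, v))"
  unfolding bilinear_ext_eq_lin_interp_y by (rule piecewise_linear_lin_interp)

lemma bilinear_ext_on_column: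
  "partition01 X \<Longrightarrow> g \<in> X \<Longrightarrow> bilinear_ext X Y A (g, v) = lin_interp Y (\<lambda>y. A (g, y)) v"
  by (simp add: bilinear_ext_eq_lin_interp_x lin_interp_node)

lemma bilinear_ext_on_row:
  "partition01 Y \<Longrightarrow> h \<in> Y \<Longrightarrow> bilinear_ext X Y A (u, h) = lin_interp X (\<lambda>x. A (x, h)) u"
  by (simp add: bilinear_ext_eq_lin_interp_y lin_interp_node)

lemma bilinear_ext_node:
  "partition01 X \<Longrightarrow> partition01 Y \<Longrightarrow> g \<in> X \<Longrightarrow> h \<in> Y \<Longrightarrow> bilinear_ext X Y A (g, h) = A (g, h)"
  by (simp add: bilinear_ext_on_column lin_interp_node)

lemma bilinear_ext_mono:
  assumes X: "partition01 X" and Y: "partition01 Y"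
    and le: "\<And>x y. x \<in> X \<Longrightarrow> y \<in> Y \<Longrightarrow> A (x, y) \<le> B (x, y)"
    and uv: "0 \<le> u" "u \<le> 1" "0 \<le> v" "v \<le> 1"
  shows "bilinear_ext X Y A (u, v) \<le> bilinear_ext X Y B (u, v)"
  unfolding bilinear_ext_eq_lin_interp_x using X Y le uv by (intro lin_interp_mono) auto

definition copula_boundary :: "real set \<Rightarrow> real set \<Rightarrow> (real \<times> real \<Rightarrow> real) \<Rightarrow> bool" where
  "copula_boundary X Y A \<longleftrightarrow>
     (\<forall>x\<in>X. (0::real) \<in> Y \<longrightarrow> A (x, 0) = 0) \<and> (\<forall>y\<in>Y. (0::real) \<in> X \<longrightarrow> A (0, y) = 0) \<and>
     (\<forall>x\<in>X. (1::real) \<in> Y \<longrightarrow> A (x, 1) = x) \<and> (\<forall>y\<in>Y. (1::real) \<in> X \<longrightarrow> A (1, y) = y)"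

definition rectangle_inequalities ::
  "real set \<Rightarrow> real set \<Rightarrow> (real \<times> real \<Rightarrow> real) \<Rightarrow> (real \<times> real \<Rightarrow> real) \<Rightarrow> bool" where
  "rectangle_inequalities X Y A B \<longleftrightarrow>
     (\<forall>x1\<in>X. \<forall>x2\<in>X. \<forall>y1\<in>Y. \<forall>y2\<in>Y. x1 \<le> x2 \<longrightarrow> y1 \<le> y2 \<longrightarrow>
        A (x1, y1) + B (x2, y2) - A (x2, y1) - A (x1, y2) \<ge> 0 \<and>
        B (x1, y1) + A (x2, y2) - A (x2, y1) - A (x1, y2) \<ge> 0 \<and>
        B (x1, y1) + B (x2, y2) - B (x2, y1) - A (x1, y2) \<ge> 0 \<and>
        B (x1, y1) + B (x2, y2) - A (x2, y1) - B (x1, y2) \<ge> 0)"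

lemma imprecise_copula_iff:
  "imprecise_copula X Y A B \<longleftrightarrow>
     copula_boundary X Y A \<and> copula_boundary X Y B \<and> rectangle_inequalities X Y A B"
  unfolding imprecise_copula_def copula_boundary_def rectangle_inequalities_def by blast

lemma imprecise_copula_subdomain:
  "imprecise_copula X Y A B \<Longrightarrow> X' \<subseteq> X \<Longrightarrow> Y' \<subseteq> Y \<Longrightarrow> imprecise_copula X' Y' A B"
  unfolding imprecise_copula_def by (meson subsetD)

lemma rectangle_inequalities_imp_le:
  "rectangle_inequalities X Y A B \<Longrightarrow> x \<in> X \<Longrightarrow> y \<in> Y \<Longrightarrow> A (x, y) \<le> B (x, y)"
  unfolding rectangle_inequalities_def by fastforce

lemma copula_boundary_bilinear_ext:
  assumes X: "partition01 X" and Y: "partition01 Y" and A: "copula_boundary X Y A"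
  shows "copula_boundary {0..1} {0..1} (bilinear_ext X Y A)"
proof -
  have nodes: "0 \<in> X" "1 \<in> X" "0 \<in> Y" "1 \<in> Y"
    using X Y unfolding partition01_def by auto
  have "bilinear_ext X Y A (u, 0) = 0" "bilinear_ext X Y A (u, 1) = u"
    if "0 \<le> u" "u \<le> 1" for u
    using A nodes lin_interp_cong[OF X that, of "\<lambda>x. A (x, 0)" "\<lambda>_. 0"]
      lin_interp_cong[OF X that, of "\<lambda>x. A (x, 1)" "\<lambda>x. x"]
    by (simp_all add: copula_boundary_def bilinear_ext_on_row[OF Y] lin_interp_const
        lin_interp_id[OF X that])
  moreover have "bilinear_ext X Y A (0, v) = 0" "bilinear_ext X Y A (1, v) = v"
    if "0 \<le> v" "v \<le> 1" for v
    using A nodes lin_interp_cong[OF Y that, of "\<lambda>y. A (0, y)" "\<lambda>_. 0"]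
      lin_interp_cong[OF Y that, of "\<lambda>y. A (1, y)" "\<lambda>y. y"]
    by (simp_all add: copula_boundary_def bilinear_ext_on_column[OF X] lin_interp_const
        lin_interp_id[OF Y that])
  ultimately show ?thesis
    unfolding copula_boundary_def by simp
qed

text \<open>The four domination hypotheses are exactly what makes the rectangle expression nonnegative
  on degenerate rectangles (x1 = x2 or y1 = y2).\<close>

lemma bilinear_ext_rectangle_nonneg:
  fixes P Q R S :: "real \<times> real \<Rightarrow> real"
  assumes X: "partition01 X" and Y: "partition01 Y"
    and nodes: "\<And>x1 x2 y1 y2. x1 \<in> X \<Longrightarrow> x2 \<in> X \<Longrightarrow> y1 \<in> Y \<Longrightarrow> y2 \<in> Y \<Longrightarrow>
        x1 \<le> x2 \<Longrightarrow> y1 \<le> y2 \<Longrightarrow> P (x1, y1) + Q (x2, y2) - R (x2, y1) - S (x1, y2) \<ge> 0"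
    and RP: "\<And>x y. x \<in> X \<Longrightarrow> y \<in> Y \<Longrightarrow> R (x, y) \<le> P (x, y)"
    and SQ: "\<And>x y. x \<in> X \<Longrightarrow> y \<in> Y \<Longrightarrow> S (x, y) \<le> Q (x, y)"
    and SP: "\<And>x y. x \<in> X \<Longrightarrow> y \<in> Y \<Longrightarrow> S (x, y) \<le> P (x, y)"
    and RQ: "\<And>x y. x \<in> X \<Longrightarrow> y \<in> Y \<Longrightarrow> R (x, y) \<le> Q (x, y)"
    and x: "0 \<le> x1" "x1 \<le> x2" "x2 \<le> 1" and y: "0 \<le> y1" "y1 \<le> y2" "y2 \<le> 1"
  shows "bilinear_ext X Y P (x1, y1) + bilinear_ext X Y Q (x2, y2)
    - bilinear_ext X Y R (x2, y1) - bilinear_ext X Y S (x1, y2) \<ge> 0"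
proof -
  note pl = piecewise_linear_add piecewise_linear_diff piecewise_linear_const
    piecewise_linear_bilinear_ext_x[OF X] piecewise_linear_bilinear_ext_y[OF Y]
  note mono = bilinear_ext_mono[OF X Y]
  show ?thesis
  proof (rule piecewise_linear4_nonneg[OF X Y, where E = "\<lambda>x1 x2 y1 y2.
      bilinear_ext X Y P (x1, y1) + bilinear_ext X Y Q (x2, y2)
      - bilinear_ext X Y R (x2, y1) - bilinear_ext X Y S (x1, y2)"], goal_cases)
    case (5 g1 g2 h1 h2)
    then show ?case
      using nodes by (simp add: bilinear_ext_node[OF X Y])
  next
    case (6 x y1 y2)
    then show ?case
      using mono[of R P, OF RP, of x y1] mono[of S Q, OF SQ, of x y2] by simp
  next
    case (7 x1 x2 y)
    then show ?case
      using mono[of S P, OF SP, of x1 y] mono[of R Q, OF RQ, of x2 y] by simp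
  qed (use x y in \<open>intro pl | simp\<close>)+
qed

lemma rectangle_inequalities_bilinear_ext:
  assumes X: "partition01 X" and Y: "partition01 Y" and AB: "rectangle_inequalities X Y A B"
  shows "rectangle_inequalities {0..1} {0..1} (bilinear_ext X Y A) (bilinear_ext X Y B)"
  using bilinear_ext_rectangle_nonneg[OF X Y, of A B A A] bilinear_ext_rectangle_nonneg[OF X Y, of B A A A]
    bilinear_ext_rectangle_nonneg[OF X Y, of B B B A] bilinear_ext_rectangle_nonneg[OF X Y, of B B A B]
    AB rectangle_inequalities_imp_le[OF AB]
  unfolding rectangle_inequalities_def by simp

theorem mainTheorem5:
  fixes X Y :: "real set" and A B :: "real \<times> real \<Rightarrow> real"
  assumes "partition01 X" and "partition01 Y"
  shows "(imprecise_copula X Y A B \<longrightarrow>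
            imprecise_copula {0..1} {0..1} (bilinear_ext X Y A) (bilinear_ext X Y B))
       \<and> (imprecise_copula {0..1} {0..1} A B \<longrightarrow> imprecise_copula X Y A B)"
proof (intro conjI impI)
  assume "imprecise_copula X Y A B"
  then show "imprecise_copula {0..1} {0..1} (bilinear_ext X Y A) (bilinear_ext X Y B)"
    using copula_boundary_bilinear_ext[OF assms] rectangle_inequalities_bilinear_ext[OF assms]
    unfolding imprecise_copula_iff by blast
next
  assume "imprecise_copula {0..1} {0..1} A B"
  then show "imprecise_copula X Y A B"
    by (rule imprecise_copula_subdomain) (use assms in \<open>auto simp: partition01_def\<close>)
qed

end
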